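(* Let $f=f(x_1,\ldots,x_n)$ be a positive non-canalyzing Boolean function with $k$ relevant variables such that for some $i\in[n]$ at least one of the restrictions $f_{|x_i=0}$, $f_{|x_i=1}$ is non-canalyzing. Then $f$ has at least $k+2$ extremal points.
   Context: $B=\{0,1\}$, $\preceq$ coordinatewise order. $f$ is positive if $f(\mathbf{x})=1$ and $\mathbf{x}\preceq\mathbf{y}$ imply $f(\mathbf{y})=1$. Extremal points are the $\preceq$-maximal false points and $\preceq$-minimal true points. $f_{|x_i=\alpha}$ is obtained by fixing $x_i=\alpha$; $x_i$ is relevant if $f_{|x_i=0}\not\equiv f_{|x_i=1}$. $f$ is canalyzing if for some $i$, $f_{|x_i=0}$ or $f_{|x_i=1}$ is constant. *)

theory Defs
  imports Main
begin

text \<open>A Boolean function of n variables is modelled as f :: bool list \<Rightarrow> bool,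
  considered on the points of B^n, i.e. lists of length n.\<close>

definition points :: "nat \<Rightarrow> bool list set" where
  "points n = {x. length x = n}"

definition leq :: "bool list \<Rightarrow> bool list \<Rightarrow> bool" where
  "leq x y \<longleftrightarrow> list_all2 (\<le>) x y"

definition positive :: "nat \<Rightarrow> (bool list \<Rightarrow> bool) \<Rightarrow> bool" where
  "positive n f \<longleftrightarrow>
     (\<forall>x\<in>points n. \<forall>y\<in>points n. f x \<and> leq x y \<longrightarrow> f y)"

text \<open>Restriction f_{|x_i=a}: again a function of the n variables x_1..x_n
  (with x_i fixed to a).\<close>
definition restr :: "(bool list \<Rightarrow> bool) \<Rightarrow> nat \<Rightarrow> bool \<Rightarrow> bool list \<Rightarrow> bool" where
  "restr f i a = (\<lambda>x. f (x[i := a]))"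

definition const_on :: "nat \<Rightarrow> (bool list \<Rightarrow> bool) \<Rightarrow> bool" where
  "const_on n g \<longleftrightarrow> (\<exists>c. \<forall>x\<in>points n. g x = c)"

definition relevant :: "nat \<Rightarrow> (bool list \<Rightarrow> bool) \<Rightarrow> nat \<Rightarrow> bool" where
  "relevant n f i \<longleftrightarrow> i < n \<and> (\<exists>x\<in>points n. restr f i False x \<noteq> restr f i True x)"

definition canalyzing :: "nat \<Rightarrow> (bool list \<Rightarrow> bool) \<Rightarrow> bool" where
  "canalyzing n f \<longleftrightarrow>
     (\<exists>i<n. const_on n (restr f i False) \<or> const_on n (restr f i True))"

definition max_false :: "nat \<Rightarrow> (bool list \<Rightarrow> bool) \<Rightarrow> bool list \<Rightarrow> bool" where
  "max_false n f x \<longleftrightarrow> x \<in> points n \<and> \<not> f x \<and>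
     (\<forall>y\<in>points n. \<not> f y \<and> leq x y \<longrightarrow> y = x)"

definition min_true :: "nat \<Rightarrow> (bool list \<Rightarrow> bool) \<Rightarrow> bool list \<Rightarrow> bool" where
  "min_true n f x \<longleftrightarrow> x \<in> points n \<and> f x \<and>
     (\<forall>y\<in>points n. f y \<and> leq y x \<longrightarrow> y = x)"

definition extremal_points :: "nat \<Rightarrow> (bool list \<Rightarrow> bool) \<Rightarrow> bool list set" where
  "extremal_points n f = {x. max_false n f x \<or> min_true n f x}"

end

theory Submission
  imports Defs
begin

text \<open>Induction on the number \<open>k\<close> of relevant variables. For positive \<open>f\<close> and relevant
  \<open>x\<^sub>i\<close>, the extremal points of \<open>f\<^sub>|\<^sub>x\<^sub>i\<^sub>=\<^sub>a\<close> inject into those of \<open>f\<close>,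
  missing at least one of them (a min true point with \<open>x\<^sub>i = 1\<close>, resp. dually a max false
  point with \<open>x\<^sub>i = 0\<close>), and \<open>i, a\<close> can be chosen so that \<open>f\<^sub>|\<^sub>x\<^sub>i\<^sub>=\<^sub>a\<close> keeps all
  other relevant variables. This gives \<open>k + 1\<close> extremal points for every positive \<open>f\<close>.
  If \<open>f\<close> is moreover non-canalyzing, either \<open>f\<^sub>|\<^sub>x\<^sub>i\<^sub>=\<^sub>a\<close> is non-canalyzing again and
  the induction continues, or it is canalyzing in some \<open>x\<^sub>j\<close>; then \<open>f\<close> vanishes whenever
  \<open>x\<^sub>i = x\<^sub>j = 0\<close>, and this yields a second extremal point of \<open>f\<close> missed by the injection,
  so the bound \<open>k + 1\<close> for the restriction already gives \<open>k + 2\<close> for \<open>f\<close>.\<close>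

lemma leq_iff_nth: "leq x y \<longleftrightarrow> length x = length y \<and> (\<forall>k<length x. x!k \<longrightarrow> y!k)"
  unfolding leq_def list_all2_conv_all_nth le_bool_def by auto

lemma length_points: "x \<in> points n \<Longrightarrow> length x = n"
  by (simp add: points_def)

lemma list_update_in_points [simp]: "x[i:=b] \<in> points n \<longleftrightarrow> x \<in> points n"
  by (simp add: points_def)

lemma replicate_in_points [simp]: "replicate n b \<in> points n"
  by (simp add: points_def)

lemma finite_points: "finite (points n)"
proof -
  have "points n = {xs. set xs \<subseteq> UNIV \<and> length xs = n}"
    by (auto simp: points_def)
  then show ?thesis
    using finite_lists_length_eq[of "UNIV :: bool set" n] by simp
qed

lemma finite_extremal_points: "finite (extremal_points n f)"
  by (rule finite_subset[OF _ finite_points])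
    (auto simp: extremal_points_def max_false_def min_true_def)

lemma nth_list_update_if [simp]: "k < length x \<Longrightarrow> x[i:=b]!k = (if i = k then b else x!k)"
  by (cases "i < length x") (auto simp: nth_list_update list_update_beyond)

lemma leq_trans: "leq x y \<Longrightarrow> leq y z \<Longrightarrow> leq x z"
  by (auto simp: leq_iff_nth)

lemma leq_update_False: "leq (x[i:=False]) x"
  by (auto simp: leq_iff_nth)

lemma leq_update_True: "leq x (x[i:=True])"
  by (auto simp: leq_iff_nth)

lemma leq_update_False_True: "leq (x[i:=False]) (x[i:=True])"
  by (auto simp: leq_iff_nth)

lemma leq_update_mono: "leq x y \<Longrightarrow> leq (x[i:=b]) (y[i:=b])"
  by (auto simp: leq_iff_nth)

lemma positive_mono:
  "positive n f \<Longrightarrow> leq x y \<Longrightarrow> y \<in> points n \<Longrightarrow> f x \<Longrightarrow> f y"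
  unfolding positive_def by (metis leq_iff_nth mem_Collect_eq points_def)

definition weight :: "bool list \<Rightarrow> nat" where
  "weight x = length (filter id x)"

lemma weight_less: "leq x y \<Longrightarrow> x \<noteq> y \<Longrightarrow> weight x < weight y"
proof -
  have "weight x \<le> weight y \<and> (weight x = weight y \<longrightarrow> x = y)" if "list_all2 (\<le>) x y"
    using that
  proof (induction rule: list_all2_induct)
    case (Cons a b x y)
    then show ?case
      by (cases a; cases b) (auto simp: weight_def)
  qed (simp add: weight_def)
  then show "leq x y \<Longrightarrow> x \<noteq> y \<Longrightarrow> weight x < weight y"
    unfolding leq_def by fastforce
qed

lemma min_true_below:
  assumes "f z" "z \<in> points n"
  shows "\<exists>m. min_true n f m \<and> leq m z"
  using assms
proof (induction "weight z" arbitrary: z rule: less_induct)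
  case less
  show ?case
  proof (cases "min_true n f z")
    case False
    then obtain y where y: "y \<in> points n" "f y" "leq y z" "y \<noteq> z"
      using less.prems unfolding min_true_def by blast
    with less.hyps[OF weight_less] obtain m where "min_true n f m" "leq m y"
      by blast
    with \<open>leq y z\<close> show ?thesis
      using leq_trans by blast
  qed (auto simp: leq_iff_nth)
qed

section \<open>Duality\<close>

definition dual :: "(bool list \<Rightarrow> bool) \<Rightarrow> bool list \<Rightarrow> bool" where
  "dual f = (\<lambda>x. \<not> f (map Not x))"

lemma Not_comp_Not [simp]: "Not \<circ> Not = id"
  by auto

lemma map_Not_Not [simp]: "map Not (map Not x) = x"
  by simp

lemma map_Not_in_points [simp]: "map Not x \<in> points n \<longleftrightarrow> x \<in> points n"
  by (simp add: points_def)

lemma leq_map_Not [simp]: "leq (map Not x) (map Not y) \<longleftrightarrow> leq y x"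
  by (auto simp: leq_iff_nth)

lemma ball_points_map_Not: "(\<forall>x\<in>points n. P x) \<longleftrightarrow> (\<forall>x\<in>points n. P (map Not x))"
  by (metis map_Not_Not map_Not_in_points)

lemma bex_points_map_Not: "(\<exists>x\<in>points n. P x) \<longleftrightarrow> (\<exists>x\<in>points n. P (map Not x))"
  by (metis map_Not_Not map_Not_in_points)

lemma positive_dual: "positive n f \<Longrightarrow> positive n (dual f)"
  unfolding positive_def dual_def by (metis leq_map_Not map_Not_in_points)

lemma restr_dual: "restr (dual f) i a = dual (restr f i (\<not> a))"
  by (simp add: restr_def dual_def map_update)

lemma const_on_dual [simp]: "const_on n (dual g) \<longleftrightarrow> const_on n g"
proof -
  have "(\<forall>x\<in>points n. dual g x = c) \<longleftrightarrow> (\<forall>x\<in>points n. g x = (\<not> c))" for c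
    by (subst ball_points_map_Not) (auto simp: dual_def)
  then show ?thesis
    unfolding const_on_def by (metis (full_types))
qed

lemma relevant_dual [simp]: "relevant n (dual f) i \<longleftrightarrow> relevant n f i"
  unfolding relevant_def restr_dual by (subst bex_points_map_Not) (auto simp: dual_def)

lemma canalyzing_dual [simp]: "canalyzing n (dual f) \<longleftrightarrow> canalyzing n f"
  unfolding canalyzing_def restr_dual by auto

lemma extremal_points_dual: "extremal_points n (dual f) = map Not ` extremal_points n f"
proof -
  have "min_true n (dual f) x \<longleftrightarrow> max_false n f (map Not x)"
    and "max_false n (dual f) x \<longleftrightarrow> min_true n f (map Not x)" for x
    unfolding min_true_def max_false_def dual_def
    by (metis leq_map_Not map_Not_Not map_Not_in_points)+
  then have "x \<in> extremal_points n (dual f) \<longleftrightarrow> map Not x \<in> extremal_points n f" for x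
    by (auto simp: extremal_points_def)
  then show ?thesis
    by (auto intro: image_eqI[where x = "map Not x" for x])
qed

lemma card_extremal_points_dual [simp]:
  "card (extremal_points n (dual f)) = card (extremal_points n f)"
proof -
  have "inj_on (map Not) (extremal_points n f)"
    by (rule inj_onI) (metis map_Not_Not)
  then show ?thesis
    unfolding extremal_points_dual by (rule card_image)
qed

section \<open>Restrictions\<close>

lemma positive_restr: "positive n f \<Longrightarrow> positive n (restr f i a)"
  unfolding positive_def restr_def by (metis leq_update_mono list_update_in_points)

lemma relevant_restr:
  assumes "relevant n (restr f i a) j"
  shows "relevant n f j \<and> j \<noteq> i"
proof
  show "j \<noteq> i"
    using assms by (auto simp: relevant_def restr_def)
  moreover obtain x where "x \<in> points n" "j < n"
    and "f (x[j:=False, i:=a]) \<noteq> f (x[j:=True, i:=a])"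
    using assms by (auto simp: relevant_def restr_def)
  ultimately show "relevant n f j"
    unfolding relevant_def restr_def
    by (metis list_update_in_points list_update_swap)
qed

lemma not_relevant_update:
  assumes "\<not> relevant n g j" "y \<in> points n"
  shows "g (y[j:=b]) = g y"
proof (cases "j < n")
  case True
  then have "g (y[j:=False]) = g (y[j:=True])"
    using assms by (auto simp: relevant_def restr_def)
  then show ?thesis
    by (metis (full_types) list_update_id)
next
  case False
  then show ?thesis
    using assms(2) by (simp add: length_points list_update_beyond)
qed

lemma min_true_restr_False:
  assumes "i < n" "min_true n (restr f i False) x"
  shows "\<not> x!i \<and> min_true n f x"
proof -
  have xp: "x \<in> points n" and fx: "f (x[i:=False])"
    and minimal: "\<forall>y\<in>points n. f (y[i:=False]) \<and> leq y x \<longrightarrow> y = x"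
    using assms(2) by (auto simp: min_true_def restr_def)
  have lx: "i < length x"
    using assms(1) xp by (simp add: length_points)
  have "x[i:=False] = x"
    using minimal[rule_format, of "x[i:=False]"] xp fx leq_update_False by simp
  then have xi: "\<not> x!i"
    using lx by (metis list_update_same_conv)
  have "min_true n f x"
    unfolding min_true_def
  proof (intro conjI ballI impI xp)
    show "f x"
      using fx \<open>x[i:=False] = x\<close> by simp
    fix y assume y: "y \<in> points n" "f y \<and> leq y x"
    then have "\<not> y!i" and "length y = length x"
      using xi lx by (auto simp: leq_iff_nth)
    then have "y[i:=False] = y"
      using lx by (simp add: list_update_same_conv)
    then show "y = x"
      using minimal y by auto
  qed
  with xi show ?thesis
    by blast
qed

lemma max_false_restr_False:
  assumes "i < n" "max_false n (restr f i False) x"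
  shows "x!i \<and> \<not> f (x[i:=False])"
proof -
  have xp: "x \<in> points n" and fx: "\<not> f (x[i:=False])"
    and maximal: "\<forall>y\<in>points n. \<not> f (y[i:=False]) \<and> leq x y \<longrightarrow> y = x"
    using assms(2) by (auto simp: max_false_def restr_def)
  then have "x[i:=True] = x"
    using leq_update_True by auto
  then show ?thesis
    using assms(1) xp fx by (metis length_points list_update_same_conv)
qed

lemma max_false_of_max_false_restr_False:
  assumes pos: "positive n f" and "i < n" and mf: "max_false n (restr f i False) x"
  shows "max_false n f (if f x then x[i:=False] else x)"
proof -
  have xp: "x \<in> points n"
    and maximal: "\<forall>y\<in>points n. \<not> f (y[i:=False]) \<and> leq x y \<longrightarrow> y = x"
    using mf by (auto simp: max_false_def restr_def)
  have lx: "i < length x"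
    using assms(2) xp by (simp add: length_points)
  have xi: "x!i" and fx0: "\<not> f (x[i:=False])"
    using max_false_restr_False[OF assms(2) mf] by auto
  show ?thesis
  proof (cases "f x")
    case True
    have "y = x[i:=False]" if y: "y \<in> points n" "\<not> f y" "leq (x[i:=False]) y" for y
    proof -
      have ly: "length y = length x"
        using y(3) by (simp add: leq_iff_nth)
      have "\<not> y!i"
      proof
        assume "y!i"
        then have "x!k \<longrightarrow> y!k" if "k < length x" for k
          using y(3) that by (cases "k = i") (auto simp: leq_iff_nth)
        then have "leq x y"
          using ly by (simp add: leq_iff_nth)
        then show False
          using positive_mono[OF pos] y True by blast
      qed
      then have "y[i:=False] = y"
        using ly lx by (simp add: list_update_same_conv)
      moreover have "leq x (y[i:=True])"
        using y(3) xi by (auto simp: leq_iff_nth)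
      moreover have "\<not> f (y[i:=True, i:=False])"
        using \<open>y[i:=False] = y\<close> y(2) by simp
      ultimately have "y[i:=True] = x"
        using maximal y(1) by simp
      then show ?thesis
        using \<open>y[i:=False] = y\<close> by (metis list_update_overwrite)
    qed
    with True xp fx0 show ?thesis
      by (simp add: max_false_def)
  next
    case False
    have "y = x" if y: "y \<in> points n" "\<not> f y" "leq x y" for y
    proof -
      have "\<not> f (y[i:=False])"
        using positive_mono[OF pos leq_update_False, of y i] y by blast
      with maximal y show ?thesis
        by blast
    qed
    with False xp show ?thesis
      by (simp add: max_false_def)
  qed
qed

text \<open>The extremal points of \<open>f\<^sub>|\<^sub>x\<^sub>i\<^sub>=\<^sub>0\<close> inject into those of \<open>f\<close>:
  min true points stay, and a max false point \<open>x\<close> (which has \<open>x\<^sub>i = 1\<close>) goes to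
  \<open>x\<close> or \<open>x[i:=0]\<close>.\<close>

lemma card_extremal_points_restr_False_add:
  assumes pos: "positive n f" and "i < n"
    and U: "U \<subseteq> extremal_points n f"
    and avoid: "\<forall>u\<in>U. u!i \<and> (f u \<or> \<not> max_false n (restr f i False) u)"
  shows "card (extremal_points n (restr f i False)) + card U \<le> card (extremal_points n f)"
proof -
  define f0 where "f0 = restr f i False"
  define E0 where "E0 = extremal_points n f0"
  define \<phi> where "\<phi> x = (if f x then x[i:=False] else x)" for x
  define \<psi> where "\<psi> z = (if min_true n f0 z then z else z[i:=True])" for z
  have image: "\<phi> x \<in> extremal_points n f \<and> \<psi> (\<phi> x) = x \<and> \<phi> x \<notin> U" if "x \<in> E0" for x
  proof (cases "min_true n f0 x")
    case True
    then have "\<not> x!i" "min_true n f x"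
      using min_true_restr_False[OF \<open>i < n\<close>] by (auto simp: f0_def)
    moreover from this have "\<phi> x = x"
      using \<open>i < n\<close> unfolding \<phi>_def min_true_def
      by (metis length_points list_update_same_conv)
    moreover have "x \<notin> U"
      using avoid \<open>\<not> x!i\<close> by blast
    ultimately show ?thesis
      using True by (simp add: \<psi>_def extremal_points_def)
  next
    case False
    then have mf: "max_false n f0 x"
      using that by (simp add: E0_def extremal_points_def)
    then have xi: "x!i" and fx0: "\<not> f (x[i:=False])" and xp: "x \<in> points n"
      using max_false_restr_False[OF \<open>i < n\<close>] by (auto simp: f0_def max_false_def)
    have "\<not> f0 (\<phi> x)"
      using fx0 by (simp add: \<phi>_def f0_def restr_def)
    then have "\<not> min_true n f0 (\<phi> x)"
      by (simp add: min_true_def)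
    moreover have "x[i:=True] = x"
      using xi \<open>i < n\<close> xp by (metis length_points list_update_same_conv)
    ultimately have "\<psi> (\<phi> x) = x"
      by (auto simp: \<psi>_def \<phi>_def)
    moreover have "\<phi> x \<in> extremal_points n f"
      using max_false_of_max_false_restr_False[OF pos \<open>i < n\<close>] mf
      by (auto simp: \<phi>_def f0_def extremal_points_def)
    moreover have "\<phi> x \<notin> U"
    proof
      assume "\<phi> x \<in> U"
      with avoid have "\<phi> x!i \<and> (f (\<phi> x) \<or> \<not> max_false n f0 (\<phi> x))"
        by (simp add: f0_def)
      then show False
        using mf xp \<open>i < n\<close> by (cases "f x") (auto simp: \<phi>_def length_points)
    qed
    ultimately show ?thesis
      by blast
  qed
  have "inj_on \<phi> E0"
    using image by (metis inj_on_inverseI)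
  moreover have "finite E0" "finite U"
    using finite_extremal_points U finite_subset unfolding E0_def by blast+
  moreover have "\<phi> ` E0 \<inter> U = {}"
    using image by blast
  ultimately have "card (\<phi> ` E0 \<union> U) = card E0 + card U"
    by (simp add: card_Un_disjoint card_image)
  moreover have "card (\<phi> ` E0 \<union> U) \<le> card (extremal_points n f)"
    using image U by (intro card_mono finite_extremal_points) auto
  ultimately show ?thesis
    by (simp add: E0_def f0_def)
qed

lemma relevant_min_true:
  assumes pos: "positive n f" and rel: "relevant n f i"
  shows "\<exists>m. min_true n f m \<and> m!i"
proof -
  obtain x where xp: "x \<in> points n" and "i < n"
    and "f (x[i:=False]) \<noteq> f (x[i:=True])"
    using rel by (auto simp: relevant_def restr_def)
  then have T: "f (x[i:=True])" and F: "\<not> f (x[i:=False])"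
    using positive_mono[OF pos leq_update_False_True, of x i] by auto
  obtain m where m: "min_true n f m" "leq m (x[i:=True])"
    using min_true_below[of f "x[i:=True]"] T xp by auto
  have "m!i"
  proof (rule ccontr)
    assume "\<not> m!i"
    then have "leq m (x[i:=False])"
      using m(2) by (auto simp: leq_iff_nth)
    then show False
      using positive_mono[OF pos] xp F m(1) by (auto simp: min_true_def)
  qed
  with m show ?thesis
    by blast
qed

lemma card_extremal_points_restr_less:
  assumes pos: "positive n f" and rel: "relevant n f i"
  shows "card (extremal_points n (restr f i a)) < card (extremal_points n f)"
proof -
  have restr_False_less: "card (extremal_points n (restr g i False)) < card (extremal_points n g)"
    if g: "positive n g" "relevant n g i" for g
  proof -
    obtain m where "min_true n g m" "m!i"
      using relevant_min_true[OF g] by blast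
    then have "card (extremal_points n (restr g i False)) + card {m} \<le> card (extremal_points n g)"
      using g by (intro card_extremal_points_restr_False_add)
        (auto simp: extremal_points_def min_true_def relevant_def)
    then show ?thesis
      by simp
  qed
  show ?thesis
  proof (cases a)
    case True
    then show ?thesis
      using restr_False_less[OF positive_dual[OF pos]] rel by (simp add: restr_dual)
  qed (use restr_False_less[OF pos rel] in simp)
qed

section \<open>A restriction keeping all other relevant variables\<close>

lemma restr_False_not_relevant_update:
  assumes "\<not> relevant n (restr f i False) j" "i \<noteq> j" "i < n" "y \<in> points n" "\<not> y!i"
  shows "f (y[j:=b]) = f y"
proof -
  have "y[i:=False] = y"
    using assms(3-5) by (metis length_points list_update_same_conv)
  then show ?thesis
    using not_relevant_update[OF assms(1,4), of b] assms(2)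
    by (simp add: restr_def list_update_swap)
qed

lemma not_relevant_restr_False_trans:
  assumes pos: "positive n f"
    and ij: "\<not> relevant n (restr f i False) j" and jl: "\<not> relevant n (restr f j False) l"
    and "i \<noteq> j" "j \<noteq> l" "i \<noteq> l" "i < n" "j < n"
  shows "\<not> relevant n (restr f i False) l"
proof -
  have down: "f (y[l:=False])" if y: "y \<in> points n" "\<not> y!i" "f (y[l:=True])" for y
  proof -
    have "f (y[l:=True, j:=False])"
      using restr_False_not_relevant_update[OF ij, of "y[l:=True]"] assms(4,6,7) y by (simp add: length_points)
    then have "f (y[j:=False, l:=False])"
      using restr_False_not_relevant_update[OF jl, of "y[j:=False]"] assms(5,8) y
      by (simp add: length_points list_update_swap)
    then have "f (y[l:=False, j:=False])"
      using assms(5) by (metis list_update_swap)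
    then show ?thesis
      using positive_mono[OF pos leq_update_False, of "y[l:=False]" j] y(1) by simp
  qed
  have "f (x[l:=False, i:=False]) = f (x[l:=True, i:=False])" if "x \<in> points n" for x
  proof -
    have "x[l:=b, i:=False] = x[i:=False, l:=b]" for b
      using assms(6) by (simp add: list_update_swap)
    moreover have "\<not> x[i:=False]!i"
      using that assms(7) by (simp add: length_points)
    ultimately show ?thesis
      using down[of "x[i:=False]"] positive_mono[OF pos leq_update_False_True, of "x[i:=False]" l] that
      by auto
  qed
  then show ?thesis
    by (auto simp: relevant_def restr_def)
qed

text \<open>If \<open>x\<^sub>j\<close> does not matter when \<open>x\<^sub>i = 0\<close> and \<open>x\<^sub>i\<close> does not matter when
  \<open>x\<^sub>j = 0\<close>, then a witness of the relevance of \<open>x\<^sub>l\<close> can be moved to one with \<open>x\<^sub>i = 1\<close>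
  by setting \<open>x\<^sub>j = 0\<close> and then \<open>x\<^sub>i = 1\<close>.\<close>

lemma relevant_restr_True_if_mutually_not_relevant:
  assumes ij: "\<not> relevant n (restr f i False) j" and ji: "\<not> relevant n (restr f j False) i"
    and "i \<noteq> j" "i < n" "j < n" and l: "relevant n f l" "l \<noteq> i"
  shows "relevant n (restr f i True) l"
proof -
  obtain x where xp: "x \<in> points n" and "l < n" and x: "f (x[l:=False]) \<noteq> f (x[l:=True])"
    using l by (auto simp: relevant_def restr_def)
  have lx: "length x = n"
    using xp by (rule length_points)
  show ?thesis
  proof (cases "x!i")
    case True
    then have "x[i:=True] = x"
      using \<open>i < n\<close> lx by (simp add: list_update_same_conv)
    then have "x[l:=b, i:=True] = x[l:=b]" for b
      using l(2) by (metis list_update_swap)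
    then show ?thesis
      unfolding relevant_def restr_def using xp x \<open>l < n\<close>
      by (intro conjI bexI[of _ x]) auto
  next
    case False
    have "l \<noteq> j"
    proof
      assume "l = j"
      then have "f (x[l:=b]) = f x" for b
        using restr_False_not_relevant_update[OF ij \<open>i \<noteq> j\<close> \<open>i < n\<close> xp False] by simp
      with x show False
        by simp
    qed
    define x' where "x' = x[j:=False]"
    have x'p: "x'[l:=b] \<in> points n" for b
      using xp by (simp add: x'_def)
    have x'j: "\<not> x'[l:=b]!j" for b
      using \<open>l \<noteq> j\<close> \<open>j < n\<close> lx by (simp add: x'_def)
    have xi: "\<not> x[l:=b]!i" for b
      using False l(2) \<open>i < n\<close> lx by simp
    have "f (x'[l:=b, i:=True]) = f (x[l:=b])" for b
    proof -
      have "f (x'[l:=b, i:=True]) = f (x'[l:=b])"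
        by (rule restr_False_not_relevant_update[OF ji \<open>i \<noteq> j\<close>[symmetric] \<open>j < n\<close> x'p x'j])
      also have "\<dots> = f (x[l:=b, j:=False])"
        using \<open>l \<noteq> j\<close> by (simp add: x'_def list_update_swap)
      also have "f (x[l:=b, j:=False]) = f (x[l:=b])"
        by (rule restr_False_not_relevant_update[OF ij \<open>i \<noteq> j\<close> \<open>i < n\<close> _ xi]) (simp add: xp)
      finally show ?thesis .
    qed
    then show ?thesis
      unfolding relevant_def restr_def using x'p[of False] x \<open>l < n\<close>
      by (intro conjI bexI[of _ x']) (auto simp: x'_def)
  qed
qed

text \<open>Unless some \<open>x\<^sub>i = 0\<close> keeps all other relevant variables relevant, a relevant
  \<open>x\<^sub>i\<close> for which \<open>x\<^sub>i = 0\<close> makes fewest relevant variables irrelevant is made irrelevant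
  by each of them, so that \<open>x\<^sub>i = 1\<close> does the job.\<close>

lemma ex_relevant_restr_eq:
  assumes pos: "positive n f" and "\<exists>i. relevant n f i"
  shows "\<exists>i a. relevant n f i \<and> {j. relevant n (restr f i a) j} = {j. relevant n f j} - {i}"
proof -
  define V where "V = {j. relevant n f j}"
  have V_less: "j < n" if "j \<in> V" for j
    using that by (simp add: V_def relevant_def)
  have "finite V"
    using V_less by (intro finite_subset[of V "{..<n}"]) auto
  have restr_sub: "{j. relevant n (restr f i a) j} \<subseteq> V - {i}" for i a
    using relevant_restr unfolding V_def by blast
  define killed where "killed i = {j \<in> V. j \<noteq> i \<and> \<not> relevant n (restr f i False) j}" for i
  show ?thesis
  proof (cases "\<exists>i\<in>V. killed i = {}")
    case True
    then obtain i where "i \<in> V" "killed i = {}"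
      by blast
    then have "V - {i} \<subseteq> {j. relevant n (restr f i False) j}"
      unfolding killed_def by blast
    with restr_sub[of i False] \<open>i \<in> V\<close> show ?thesis
      unfolding V_def by blast
  next
    case False
    obtain i0 where "i0 \<in> V"
      using assms(2) unfolding V_def by blast
    then obtain i where "i \<in> V" and i_min: "\<And>i'. i' \<in> V \<Longrightarrow> card (killed i) \<le> card (killed i')"
      using ex_has_least_nat[of "\<lambda>i. i \<in> V" i0 "\<lambda>i. card (killed i)"] by blast
    with False obtain j where j: "j \<in> killed i"
      by blast
    then have "j \<in> V" "j \<noteq> i" and ij: "\<not> relevant n (restr f i False) j"
      by (auto simp: killed_def)
    have ji: "\<not> relevant n (restr f j False) i"
    proof
      assume ji: "relevant n (restr f j False) i"
      have "killed j \<subseteq> killed i - {j}"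
      proof
        fix l assume l: "l \<in> killed j"
        then have "l \<noteq> i"
          using ji by (auto simp: killed_def)
        with l show "l \<in> killed i - {j}"
          using not_relevant_restr_False_trans[OF pos ij, of l] V_less \<open>i \<in> V\<close> \<open>j \<in> V\<close> \<open>j \<noteq> i\<close>
          by (auto simp: killed_def)
      qed
      moreover have "finite (killed i)"
        using \<open>finite V\<close> by (simp add: killed_def)
      ultimately have "card (killed j) < card (killed i)"
        using j by (metis card_Diff1_less card_mono finite_Diff le_less_trans)
      with i_min[OF \<open>j \<in> V\<close>] show False
        by simp
    qed
    have "V - {i} \<subseteq> {l. relevant n (restr f i True) l}"
    proof
      fix l assume "l \<in> V - {i}"
      then show "l \<in> {l. relevant n (restr f i True) l}"
        using relevant_restr_True_if_mutually_not_relevant[OF ij ji \<open>j \<noteq> i\<close>[symmetric]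
            V_less[OF \<open>i \<in> V\<close>] V_less[OF \<open>j \<in> V\<close>], of l]
        unfolding V_def by blast
    qed
    with restr_sub[of i True] \<open>i \<in> V\<close> show ?thesis
      unfolding V_def by blast
  qed
qed

section \<open>Canalyzing restrictions\<close>

lemma noncanalyzing_witnesses:
  assumes "\<not> canalyzing n f" "k < n"
  shows "\<exists>x\<in>points n. \<not> f (x[k:=True])" "\<exists>x\<in>points n. f (x[k:=False])"
  using assms unfolding canalyzing_def const_on_def restr_def by (metis (full_types))+

text \<open>If \<open>f\<^sub>|\<^sub>x\<^sub>i\<^sub>=\<^sub>0\<close> is canalyzing in \<open>x\<^sub>j\<close>, then for non-canalyzing positive \<open>f\<close> the
  only possibility is that \<open>x\<^sub>j = 0\<close> forces \<open>f\<^sub>|\<^sub>x\<^sub>i\<^sub>=\<^sub>0\<close> to be \<open>0\<close>; each of the other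
  three combinations would make \<open>f\<close> itself canalyzing in \<open>x\<^sub>i\<close> or \<open>x\<^sub>j\<close>.\<close>

lemma false_if_zero_at_canalyzing_pair:
  assumes pos: "positive n f" and nc: "\<not> canalyzing n f" and "i < n" "j < n"
    and const: "const_on n (restr (restr f i False) j b)"
    and y: "y \<in> points n" "\<not> y!i" "\<not> y!j"
  shows "\<not> f y"
proof -
  obtain c where c: "\<And>x. x \<in> points n \<Longrightarrow> f (x[j:=b, i:=False]) = c"
    using const by (auto simp: const_on_def restr_def)
  have "\<not> c"
  proof
    assume c
    obtain w where w: "w \<in> points n" "\<not> f (w[(if b then j else i):=True])"
      using noncanalyzing_witnesses(1)[OF nc] \<open>i < n\<close> \<open>j < n\<close> by (cases b) auto
    moreover have "leq (w[j:=b, i:=False]) (w[(if b then j else i):=True])"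
      by (cases b) (auto simp: leq_iff_nth)
    ultimately show False
      using positive_mono[OF pos] c[OF w(1)] \<open>c\<close> by auto
  qed
  have "\<not> b"
  proof
    assume b
    obtain w where w: "w \<in> points n" "f (w[i:=False])"
      using noncanalyzing_witnesses(2)[OF nc \<open>i < n\<close>] by blast
    have "leq (w[i:=False]) (w[j:=True, i:=False])"
      by (auto simp: leq_iff_nth)
    then have "f (w[j:=b, i:=False])"
      using positive_mono[OF pos] w \<open>b\<close> by auto
    with c[OF w(1)] \<open>\<not> c\<close> show False
      by simp
  qed
  have "y[j:=False] = y" "y[i:=False] = y"
    using y \<open>i < n\<close> \<open>j < n\<close> by (metis length_points list_update_same_conv)+
  then show ?thesis
    using c[OF y(1)] \<open>\<not> b\<close> \<open>\<not> c\<close> by simp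
qed

lemma max_false_replicate_two_zeros:
  assumes pos: "positive n f"
    and "f ((replicate n True)[s:=False])" "f ((replicate n True)[j:=False])"
    and "\<not> f ((replicate n True)[j:=False, s:=False])"
  shows "max_false n f ((replicate n True)[j:=False, s:=False])"
proof -
  let ?one = "replicate n True"
  have "y = ?one[j:=False, s:=False]"
    if y: "y \<in> points n" "\<not> f y" "leq (?one[j:=False, s:=False]) y" for y
  proof -
    have ly: "length y = n"
      using y(1) by (rule length_points)
    have ones: "y!k" if "k < n" "k \<noteq> j" "k \<noteq> s" for k
      using y(3) that by (auto simp: leq_iff_nth)
    have "\<not> y!j"
    proof
      assume "y!j"
      then have "leq (?one[s:=False]) y"
        using ones ly by (auto simp: leq_iff_nth)
      then show False
        using positive_mono[OF pos] y assms(2) by blast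
    qed
    moreover have "\<not> y!s"
    proof
      assume "y!s"
      then have "leq (?one[j:=False]) y"
        using ones ly by (auto simp: leq_iff_nth)
      then show False
        using positive_mono[OF pos] y assms(3) by blast
    qed
    ultimately show ?thesis
      using ones ly by (intro nth_equalityI) auto
  qed
  with assms(4) show ?thesis
    by (simp add: max_false_def points_def)
qed

text \<open>The point \<open>p\<close> is \<open>1\<close> except at \<open>x\<^sub>j\<close> and at a variable \<open>x\<^sub>s\<close> of the unique min true
  point \<open>S\<close> with \<open>S\<^sub>i = 1\<close>.\<close>

lemma max_false_if_unique_min_true:
  assumes pos: "positive n f" and nc: "\<not> canalyzing n f" and "i < n" "j < n"
    and zero: "\<And>y. y \<in> points n \<Longrightarrow> \<not> y!i \<Longrightarrow> \<not> y!j \<Longrightarrow> \<not> f y"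
    and S: "min_true n f S" "S!i" "\<not> S!j"
    and unique: "\<And>R. min_true n f R \<Longrightarrow> R!i \<Longrightarrow> R = S"
  shows "\<exists>p. max_false n f p \<and> p!i \<and> \<not> max_false n (restr f i False) p"
proof -
  let ?one = "replicate n True"
  have Sp: "S \<in> points n" and "f S" and lS: "length S = n"
    using S(1) by (auto simp: min_true_def length_points)
  have "\<exists>s<n. s \<noteq> i \<and> S!s"
  proof (rule ccontr)
    assume none: "\<not> ?thesis"
    obtain y where y: "y \<in> points n" "\<not> f (y[i:=True])"
      using noncanalyzing_witnesses(1)[OF nc \<open>i < n\<close>] by blast
    then have "leq S (y[i:=True])"
      using none lS by (auto simp: leq_iff_nth length_points)
    then show False
      using positive_mono[OF pos] y \<open>f S\<close> by simp
  qed
  then obtain s where "s < n" "s \<noteq> i" "S!s"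
    by blast
  define p where "p = ?one[j:=False, s:=False]"
  have "i \<noteq> j" "s \<noteq> j"
    using S(2,3) \<open>S!s\<close> by auto
  have pp: "p \<in> points n"
    by (simp add: p_def)
  have p_nth: "p!k \<longleftrightarrow> k \<noteq> j \<and> k \<noteq> s" if "k < n" for k
    using that by (simp add: p_def)
  have "\<not> f p"
  proof
    assume "f p"
    then obtain R where R: "min_true n f R" "leq R p"
      using min_true_below[of f p] pp by blast
    then have "\<not> R!j" "\<not> R!s"
      using p_nth \<open>j < n\<close> \<open>s < n\<close> pp by (auto simp: leq_iff_nth length_points)
    moreover have "R!i"
      using zero \<open>\<not> R!j\<close> R(1) by (auto simp: min_true_def)
    ultimately show False
      using unique R(1) \<open>S!s\<close> by blast
  qed
  have "f (?one[s:=False])"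
  proof -
    obtain x where "x \<in> points n" "f (x[s:=False])"
      using noncanalyzing_witnesses(2)[OF nc \<open>s < n\<close>] by blast
    moreover have "leq (x[s:=False]) (?one[s:=False])"
      using \<open>x \<in> points n\<close> by (auto simp: leq_iff_nth length_points)
    ultimately show ?thesis
      using positive_mono[OF pos] by auto
  qed
  moreover have "f (?one[j:=False])"
    using positive_mono[OF pos, of S "?one[j:=False]"] \<open>f S\<close> S(3) lS by (auto simp: leq_iff_nth)
  ultimately have "max_false n f p"
    using max_false_replicate_two_zeros[OF pos] \<open>\<not> f p\<close> by (simp add: p_def)
  moreover have "\<not> max_false n (restr f i False) p"
  proof
    assume "max_false n (restr f i False) p"
    moreover have "\<not> f (p[s:=True, i:=False])"
      using zero pp \<open>i < n\<close> \<open>j < n\<close> \<open>s \<noteq> j\<close> \<open>i \<noteq> j\<close> by (simp add: p_def)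
    ultimately have "p[s:=True] = p"
      using leq_update_True pp by (auto simp: max_false_def restr_def)
    then show False
      using p_nth \<open>s < n\<close> pp by (metis length_points list_update_same_conv)
  qed
  moreover have "p!i"
    using p_nth \<open>i < n\<close> \<open>i \<noteq> j\<close> \<open>s \<noteq> i\<close> by auto
  ultimately show ?thesis
    by blast
qed

lemma card_extremal_points_restr_False_canalyzing:
  assumes pos: "positive n f" and nc: "\<not> canalyzing n f" and rel: "relevant n f i"
    and "canalyzing n (restr f i False)"
  shows "card (extremal_points n (restr f i False)) + 2 \<le> card (extremal_points n f)"
proof -
  have "i < n"
    using rel by (simp add: relevant_def)
  obtain j b where "j < n" and const: "const_on n (restr (restr f i False) j b)"
    using assms(4) unfolding canalyzing_def by blast
  note zero = false_if_zero_at_canalyzing_pair[OF pos nc \<open>i < n\<close> \<open>j < n\<close> const]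
  obtain z where "z \<in> points n" "f (z[j:=False])"
    using noncanalyzing_witnesses(2)[OF nc \<open>j < n\<close>] by blast
  then obtain S where S: "min_true n f S" "leq S (z[j:=False])"
    using min_true_below[of f "z[j:=False]"] by auto
  then have "\<not> S!j"
    using \<open>j < n\<close> by (auto simp: leq_iff_nth min_true_def length_points)
  moreover have "S!i"
    using zero S(1) \<open>\<not> S!j\<close> by (auto simp: min_true_def)
  ultimately obtain U where U: "U \<subseteq> extremal_points n f" "card U = 2"
    and avoid: "\<forall>u\<in>U. u!i \<and> (f u \<or> \<not> max_false n (restr f i False) u)"
  proof (cases "\<exists>S'. min_true n f S' \<and> S'!i \<and> S' \<noteq> S")
    case True
    then obtain S' where S': "min_true n f S'" "S'!i" "S' \<noteq> S"
      by blast
    have "{S, S'} \<subseteq> extremal_points n f"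
      using S(1) S'(1) by (simp add: extremal_points_def)
    moreover have "card {S, S'} = 2"
      using S'(3) by simp
    moreover have "\<forall>u\<in>{S, S'}. u!i \<and> (f u \<or> \<not> max_false n (restr f i False) u)"
      using S(1) S'(1,2) \<open>S!i\<close> by (simp add: min_true_def)
    ultimately show ?thesis
      by (rule that)
  next
    case False
    then obtain p where p: "max_false n f p" "p!i" "\<not> max_false n (restr f i False) p"
      using max_false_if_unique_min_true[OF pos nc \<open>i < n\<close> \<open>j < n\<close> zero S(1) \<open>S!i\<close> \<open>\<not> S!j\<close>]
      by blast
    have "S \<noteq> p"
      using S(1) p(1) by (auto simp: min_true_def max_false_def)
    have "{S, p} \<subseteq> extremal_points n f"
      using S(1) p(1) by (simp add: extremal_points_def)
    moreover have "card {S, p} = 2"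
      using \<open>S \<noteq> p\<close> by simp
    moreover have "\<forall>u\<in>{S, p}. u!i \<and> (f u \<or> \<not> max_false n (restr f i False) u)"
      using S(1) p(2,3) \<open>S!i\<close> by (simp add: min_true_def)
    ultimately show ?thesis
      by (rule that)
  qed
  with card_extremal_points_restr_False_add[OF pos \<open>i < n\<close> U(1) avoid] show ?thesis
    by simp
qed

lemma card_extremal_points_restr_canalyzing:
  assumes pos: "positive n f" and nc: "\<not> canalyzing n f" and rel: "relevant n f i"
    and "canalyzing n (restr f i a)"
  shows "card (extremal_points n (restr f i a)) + 2 \<le> card (extremal_points n f)"
proof (cases a)
  case True
  then show ?thesis
    using card_extremal_points_restr_False_canalyzing[OF positive_dual[OF pos]] assms
    by (simp add: restr_dual)
qed (use card_extremal_points_restr_False_canalyzing[OF assms(1-3)] assms(4) in simp)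

lemma finite_relevant: "finite {i. relevant n f i}"
  by (rule finite_subset[of _ "{..<n}"]) (auto simp: relevant_def)

lemma extremal_points_nonempty: "extremal_points n f \<noteq> {}"
proof (cases "f (replicate n True)")
  case True
  then obtain m where "min_true n f m"
    using min_true_below[of f "replicate n True" n] by auto
  then show ?thesis
    by (auto simp: extremal_points_def)
next
  case False
  have "y = replicate n True" if "y \<in> points n" "leq (replicate n True) y" for y
    using that by (intro nth_equalityI) (auto simp: leq_iff_nth)
  with False have "max_false n f (replicate n True)"
    by (simp add: max_false_def)
  then show ?thesis
    by (auto simp: extremal_points_def)
qed

lemma relevant_exists_if_not_constant:
  assumes pos: "positive n f" and "x \<in> points n" "y \<in> points n" "f x" "\<not> f y"
  shows "\<exists>k. relevant n f k"
proof -
  obtain m where m: "min_true n f m" "leq m x"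
    using min_true_below[of f x] assms(2,4) by auto
  then have mp: "m \<in> points n" and "f m"
    by (auto simp: min_true_def)
  show ?thesis
  proof (cases "\<exists>k<n. m!k")
    case True
    then obtain k where "k < n" "m!k"
      by blast
    then have "m[k:=False] \<noteq> m" and "m[k:=True] = m"
      using mp by (auto simp: length_points list_update_same_conv)
    then have "\<not> f (m[k:=False])"
      using m(1) mp leq_update_False by (auto simp: min_true_def)
    with \<open>f m\<close> \<open>m[k:=True] = m\<close> show ?thesis
      unfolding relevant_def restr_def using \<open>k < n\<close> mp by metis
  next
    case False
    then have "leq m y"
      using mp assms(3) by (auto simp: leq_iff_nth length_points)
    then show ?thesis
      using positive_mono[OF pos] assms(3,5) \<open>f m\<close> by blast
  qed
qed

lemma relevant_exists_if_not_canalyzing: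
  assumes "positive n f" "\<not> canalyzing n f" "0 < n"
  shows "\<exists>k. relevant n f k"
proof -
  obtain x y where "x \<in> points n" "\<not> f (x[0:=True])" "y \<in> points n" "f (y[0:=False])"
    using noncanalyzing_witnesses[OF assms(2,3)] by blast
  then show ?thesis
    using relevant_exists_if_not_constant[OF assms(1), of "y[0:=False]" "x[0:=True]"] by simp
qed

lemma card_relevant_less_card_extremal_points:
  "positive n f \<Longrightarrow> card {i. relevant n f i} < card (extremal_points n f)"
proof (induction "card {i. relevant n f i}" arbitrary: f)
  case 0
  then show ?case
    using extremal_points_nonempty finite_extremal_points by (metis card_gt_0_iff)
next
  case (Suc k)
  then have "\<exists>i. relevant n f i"
    by (metis Collect_empty_eq card.empty nat.distinct(1))
  then obtain i a where "relevant n f i"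
    and restr: "{j. relevant n (restr f i a) j} = {j. relevant n f j} - {i}"
    using ex_relevant_restr_eq[OF Suc.prems] by blast
  then have "card {j. relevant n (restr f i a) j} = k"
    using Suc.hyps(2) finite_relevant by simp
  then have "k < card (extremal_points n (restr f i a))"
    using Suc.hyps(1) positive_restr[OF Suc.prems] by blast
  moreover have "card (extremal_points n (restr f i a)) < card (extremal_points n f)"
    using card_extremal_points_restr_less[OF Suc.prems \<open>relevant n f i\<close>] .
  ultimately show ?case
    using Suc.hyps(2) by linarith
qed

lemma card_relevant_add_two_le_card_extremal_points:
  "positive n f \<Longrightarrow> \<not> canalyzing n f \<Longrightarrow> 0 < n \<Longrightarrow>
    card {i. relevant n f i} + 2 \<le> card (extremal_points n f)"
proof (induction "card {i. relevant n f i}" arbitrary: f)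
  case 0
  then show ?case
    using relevant_exists_if_not_canalyzing finite_relevant by (metis card_0_eq empty_iff mem_Collect_eq)
next
  case (Suc k)
  obtain i a where "relevant n f i"
    and restr: "{j. relevant n (restr f i a) j} = {j. relevant n f j} - {i}"
    using ex_relevant_restr_eq relevant_exists_if_not_canalyzing Suc.prems by metis
  then have k: "card {j. relevant n (restr f i a) j} = k"
    using Suc.hyps(2) finite_relevant by simp
  have pos_restr: "positive n (restr f i a)"
    using positive_restr[OF Suc.prems(1)] .
  show ?case
  proof (cases "canalyzing n (restr f i a)")
    case True
    have "k < card (extremal_points n (restr f i a))"
      using card_relevant_less_card_extremal_points[OF pos_restr] k by simp
    moreover have "card (extremal_points n (restr f i a)) + 2 \<le> card (extremal_points n f)"
      using card_extremal_points_restr_canalyzing[OF Suc.prems(1,2) \<open>relevant n f i\<close> True] .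
    ultimately show ?thesis
      using Suc.hyps(2) by simp
  next
    case False
    then have "k + 2 \<le> card (extremal_points n (restr f i a))"
      using Suc.hyps(1)[OF k[symmetric] pos_restr] Suc.prems(3) k by simp
    moreover have "card (extremal_points n (restr f i a)) < card (extremal_points n f)"
      using card_extremal_points_restr_less[OF Suc.prems(1) \<open>relevant n f i\<close>] .
    ultimately show ?thesis
      using Suc.hyps(2) by simp
  qed
qed

theorem mainTheorem11:
  fixes n k :: nat and f :: "bool list \<Rightarrow> bool"
  assumes "positive n f"
    and "\<not> canalyzing n f"
    and "card {i. relevant n f i} = k"
    and "\<exists>i<n. \<not> canalyzing n (restr f i False) \<or> \<not> canalyzing n (restr f i True)"
  shows "card (extremal_points n f) \<ge> k + 2"
proof -
  \<comment> \<open>The hypothesis on the restrictions only rules out \<open>n = 0\<close>, where every \<open>f\<close> is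
    non-canalyzing but has a single extremal point.\<close>
  have "0 < n"
    using assms(4) by auto
  then show ?thesis
    using card_relevant_add_two_le_card_extremal_points[OF assms(1,2)] assms(3) by simp
qed

end
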